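(* Assume $\sigma_1(x)\equiv\sigma_1(0)\ne0$ is constant, so that $\sigma_2(x)=(q-1)\tau'(0)x^2+(q-1)\tau(0)x+q\sigma_1(0)=\tfrac12\sigma_2''(0)(x-a_2)(x-b_2)$, and assume its zeros are real with $0<a_2\le b_2$ and that $\Lambda_q:=\tau'(0)/\sigma_1(0)<0$. Put $a=b_2$ and $$\rho(x)=|x|^{\alpha}x^{\log_qx-1}\,(qa_2/x,\,qa/x;q)_\infty,\qquad q^{\alpha}=\frac{q^{-1}\tfrac12\sigma_2''(0)}{\sigma_1(0)}.$$ Then there exist polynomials $P_n$, $n\in\mathbb{N}_0$, with $P_n$ of degree $n$ a solution of the q-EHT with $\lambda=\lambda_n$, and nonzero constants $d_n^2$, such that for all $m,n\in\mathbb{N}_0$ $$\int_a^{\infty}P_n(x)P_m(x)\rho(x)\,d_{q^{-1}}x=d_n^2\delta_{mn},$$ i.e. orthogonality with respect to $\rho$ supported on $\{q^{-k}a\}_{k\in\mathbb{N}_0}$.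
   Context: Throughout $0<q<1$. For a function $y$ and $\zeta\in\{q,q^{-1}\}$, $D_\zeta y(x)=\frac{y(x)-y(\zeta x)}{(1-\zeta)x}$ for $x\ne0$ and $D_\zeta y(0)=y'(0)$; $[n]_q=\frac{1-q^n}{1-q}$. Let $\sigma_1$ be a real polynomial of degree at most two, $\tau(x)=\tau'(0)x+\tau(0)$ a real polynomial with $\tau'(0)\ne0$, and $\sigma_2(x):=q[\sigma_1(x)+(1-q^{-1})x\tau(x)]$. The q-EHT with parameter $n$ is $\sigma_1(x)D_{q^{-1}}D_qy(x)+\tau(x)D_qy(x)+\lambda_ny(x)=0$, $\lambda_n=-[n]_q\big(\tau'(0)+\tfrac12[n-1]_{q^{-1}}\sigma_1''(0)\big)$. $(\beta;q)_\infty=\prod_{k\ge0}(1-\beta q^k)$, $(\beta_1,\dots,\beta_r;q)_\infty=\prod_i(\beta_i;q)_\infty$. For $q^\alpha=c$ ($c\ne0$), $\alpha$ is any complex number with $e^{\alpha\ln q}=c$ and $|x|^\alpha:=e^{\alpha\ln|x|}$; for $x>0$, $x^{\log_qx-1}:=\exp\big((\log_qx-1)\ln x\big)$. For $a>0$, $\int_a^\infty f(x)\,d_{q^{-1}}x=(q^{-1}-1)a\sum_{j\ge0}q^{-j}f(q^{-j}a)$. *)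

theory Defs
  imports "HOL-Analysis.Analysis" "HOL-Computational_Algebra.Polynomial"
begin

definition qD :: "real \<Rightarrow> (real \<Rightarrow> real) \<Rightarrow> real \<Rightarrow> real" where
  "qD \<zeta> y x = (if x = 0 then deriv y 0 else (y x - y (\<zeta> * x)) / ((1 - \<zeta>) * x))"

definition qnum :: "real \<Rightarrow> real \<Rightarrow> real" where
  "qnum q n = (1 - q powr n) / (1 - q)"

definition qlambda :: "real \<Rightarrow> nat \<Rightarrow> real \<Rightarrow> real \<Rightarrow> real" where
  "qlambda q n tau1 s1pp = - qnum q (real n) * (tau1 + 1/2 * qnum (1/q) (real n - 1) * s1pp)"

definition qEHT :: "real \<Rightarrow> (real \<Rightarrow> real) \<Rightarrow> (real \<Rightarrow> real) \<Rightarrow> real \<Rightarrow> (real \<Rightarrow> real) \<Rightarrow> bool" where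
  "qEHT q \<sigma>1 \<tau> lam y \<longleftrightarrow>
     (\<forall>x. \<sigma>1 x * qD (1/q) (qD q y) x + \<tau> x * qD q y x + lam * y x = 0)"

definition qpoch_inf :: "real \<Rightarrow> real \<Rightarrow> real" where
  "qpoch_inf \<beta> q = (\<Prod>k. 1 - \<beta> * q ^ k)"

text \<open>Jackson integral int_a^infinity f(x) d_{q^-1}x = I, i.e. the defining series
  (q^-1 - 1) a sum_j q^-j f(q^-j a) converges to I.\<close>
definition jackson_inf_has :: "real \<Rightarrow> (real \<Rightarrow> complex) \<Rightarrow> real \<Rightarrow> complex \<Rightarrow> bool" where
  "jackson_inf_has q f a I \<longleftrightarrow>
     (\<lambda>j. of_real ((1/q - 1) * a * (1/q) ^ j) * f ((1/q) ^ j * a)) sums I"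

end

theory Submission
  imports Defs
begin

text \<open>
  On the lattice \<open>x_j = q^(-j) b2\<close> the q-EHT with constant \<open>\<sigma>1\<close> becomes the difference equation
  \<open>A(x_j) (f(x_(j+1)) - f(x_j)) + B(x_j) (f(q x_j) - f(x_j)) = -\<lambda> f(x_j)\<close> with
  \<open>B = \<sigma>2 / ((1-q) x)^2\<close>, which vanishes at the endpoint \<open>x_0 = b2\<close>. The Jackson weights
  \<open>w_j\<close> of \<open>\<rho>\<close> satisfy the Pearson relation \<open>w_(j+1) \<sigma>2(x_(j+1)) = w_j \<sigma>1(0)\<close>, i.e.
  \<open>w_j A(x_j) = w_(j+1) B(x_(j+1))\<close>, so summation by parts turns \<open>\<lambda> \<Sum> w_j f(x_j) g(x_j)\<close>
  into the symmetric form \<open>\<Sum> w_j A(x_j) \<Delta>f(x_j) \<Delta>g(x_j)\<close>, and eigenfunctions for the distinct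
  eigenvalues \<open>\<lambda>_n = -[n]_q \<tau>'(0)\<close> are orthogonal. Since \<open>|\<sigma>2|\<close> is unbounded along the lattice,
  the weights decay faster than any geometric sequence, which makes all series converge.
  The operator is triangular on monomials, which gives the polynomial solutions, and a nonzero
  polynomial has positive norm because it cannot vanish on the infinite lattice.
\<close>

section \<open>The q-Pochhammer symbol\<close>

lemma qpoch_inf_convergent_prod:
  fixes q \<beta> :: real
  assumes "0 < q" "q < 1"
  shows "convergent_prod (\<lambda>k. 1 - \<beta> * q ^ k)"
proof -
  have "summable (\<lambda>k. norm ((1 - \<beta> * q ^ k) - 1))"
    using assms by (simp add: abs_mult summable_geometric summable_mult)
  then show ?thesis
    by (intro abs_convergent_prod_imp_convergent_prod summable_imp_abs_convergent_prod)
qed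

lemma qpoch_inf_shift:
  fixes q \<beta> :: real
  assumes "0 < q" "q < 1"
  shows "qpoch_inf \<beta> q = (1 - \<beta>) * qpoch_inf (\<beta> * q) q"
proof -
  have "(\<lambda>k. 1 - \<beta> * q ^ k) has_prod ((\<Prod>k<1. 1 - \<beta> * q ^ k) * (\<Prod>k. 1 - \<beta> * q ^ (k + 1)))"
    using has_prod_ignore_initial_segment' qpoch_inf_convergent_prod[OF assms] by blast
  then have "(\<Prod>k. 1 - \<beta> * q ^ k) = (1 - \<beta>) * (\<Prod>k. 1 - \<beta> * q ^ (k + 1))"
    by (simp add: has_prod_unique[symmetric])
  then show ?thesis
    unfolding qpoch_inf_def by (simp add: mult.assoc mult.commute[of q])
qed

lemma qpoch_inf_pos:
  fixes q \<beta> :: real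
  assumes q: "0 < q" "q < 1" and \<beta>: "0 \<le> \<beta>" "\<beta> < 1"
  shows "qpoch_inf \<beta> q > 0"
proof -
  have "(\<lambda>k. 1 - \<beta> * q ^ k) has_prod qpoch_inf \<beta> q"
    unfolding qpoch_inf_def using qpoch_inf_convergent_prod[OF q] convergent_prod_has_prod by blast
  moreover have "1 - \<beta> * q ^ k > 0" for k
  proof -
    have "\<beta> * q ^ k \<le> \<beta>"
      using q \<beta> by (simp add: mult_left_le power_le_one)
    then show ?thesis using \<beta> by linarith
  qed
  ultimately show ?thesis using has_prod_pos by blast
qed

section \<open>Polynomial solutions of the q-EHT\<close>

definition qint :: "real \<Rightarrow> nat \<Rightarrow> real" where
  "qint z n = (1 - z ^ n) / (1 - z)"

lemma qint_0 [simp]: "qint z 0 = 0"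
  by (simp add: qint_def)

lemma qint_inject:
  fixes q :: real
  assumes "0 < q" "q < 1"
  shows "qint q m = qint q n \<longleftrightarrow> m = n"
  using assms by (auto simp: qint_def divide_simps power_inject_exp')

lemma qlambda_constant_sigma:
  assumes "0 < q"
  shows "qlambda q n tau1 (deriv (deriv (\<lambda>x. s0)) 0) = - qint q n * tau1"
  using assms by (simp add: qlambda_def qnum_def qint_def powr_realpow)

definition poly_qderiv :: "real \<Rightarrow> real poly \<Rightarrow> real poly" where
  "poly_qderiv z p = (\<Sum>k<degree p. monom (coeff p (Suc k) * qint z (Suc k)) k)"

lemma coeff_poly_qderiv: "coeff (poly_qderiv z p) k = coeff p (Suc k) * qint z (Suc k)"
  by (auto simp: poly_qderiv_def coeff_sum coeff_monom coeff_eq_0 sum.delta)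

lemma poly_poly_qderiv:
  assumes "z \<noteq> 1"
  shows "poly p x - poly p (z * x) = (1 - z) * x * poly (poly_qderiv z p) x"
proof -
  have "poly p x - poly p (z * x) = (\<Sum>i<Suc (degree p). coeff p i * (x ^ i - (z * x) ^ i))"
    by (simp add: poly_altdef lessThan_Suc_atMost sum_subtractf[symmetric] algebra_simps)
  also have "\<dots> = (\<Sum>i<degree p. coeff p (Suc i) * (x ^ Suc i - (z * x) ^ Suc i))"
    unfolding sum.lessThan_Suc_shift by simp
  also have "\<dots> = (1 - z) * x * (\<Sum>i<degree p. coeff p (Suc i) * qint z (Suc i) * x ^ i)"
  proof -
    have "1 - z \<noteq> 0" using assms by simp
    then show ?thesis
      unfolding sum_distrib_left
      by (intro sum.cong refl) (simp add: qint_def power_mult_distrib field_simps)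
  qed
  also have "\<dots> = (1 - z) * x * poly (poly_qderiv z p) x"
    by (simp add: poly_qderiv_def poly_sum poly_monom)
  finally show ?thesis .
qed

lemma qD_poly:
  assumes "z \<noteq> 1"
  shows "qD z (poly p) = poly (poly_qderiv z p)"
proof
  fix x :: real
  show "qD z (poly p) x = poly (poly_qderiv z p) x"
  proof (cases "x = 0")
    case True
    have "deriv (poly p) 0 = poly (pderiv p) 0"
      by (rule DERIV_imp_deriv) (rule poly_DERIV)
    with True assms show ?thesis
      by (simp add: qD_def poly_0_coeff_0 coeff_pderiv coeff_poly_qderiv qint_def)
  next
    case False
    with assms show ?thesis
      by (simp add: qD_def poly_poly_qderiv)
  qed
qed

lemma coeff_qEHT_operator:
  "coeff (smult s0 (poly_qderiv (1/q) (poly_qderiv q p)) + [:tau0, tau1:] * poly_qderiv q p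
          + smult lam p) k
     = s0 * qint q (k + 2) * qint (1/q) (k + 1) * coeff p (k + 2)
       + tau0 * qint q (k + 1) * coeff p (k + 1) + (tau1 * qint q k + lam) * coeff p k"
  by (cases k) (simp_all add: coeff_poly_qderiv coeff_pCons algebra_simps)

lemma qEHT_poly_iff:
  assumes "q \<noteq> 0" "q \<noteq> 1"
  shows "qEHT q (\<lambda>x. s0) (\<lambda>x. tau1 * x + tau0) lam (poly p) \<longleftrightarrow>
     smult s0 (poly_qderiv (1/q) (poly_qderiv q p)) + [:tau0, tau1:] * poly_qderiv q p + smult lam p = 0"
proof -
  have "1/q \<noteq> 1" using assms by simp
  then show ?thesis
    using assms
    by (simp add: qEHT_def qD_poly poly_all_0_iff_0[symmetric] algebra_simps)
qed

text \<open>Comparing coefficients of \<open>x^k\<close> in the q-EHT gives a three-term recurrence, which determines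
  the monic solution of degree \<open>n\<close> downwards from \<open>k = n\<close> because \<open>[k]_q \<noteq> [n]_q\<close> for \<open>k < n\<close>.\<close>

function eigenpoly_coeff :: "real \<Rightarrow> real \<Rightarrow> real \<Rightarrow> real \<Rightarrow> nat \<Rightarrow> nat \<Rightarrow> real" where
  "eigenpoly_coeff q s0 tau0 tau1 n k =
     (if n \<le> k then (if k = n then 1 else 0)
      else - (s0 * qint q (k + 2) * qint (1/q) (k + 1) * eigenpoly_coeff q s0 tau0 tau1 n (k + 2)
              + tau0 * qint q (k + 1) * eigenpoly_coeff q s0 tau0 tau1 n (k + 1))
           / (tau1 * (qint q k - qint q n)))"
  by auto
termination
  by (relation "Wellfounded.measure (\<lambda>(q, s0, tau0, tau1, n, k). n - k)") auto

declare eigenpoly_coeff.simps [simp del]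

lemma eigenpoly_coeff_recurrence:
  fixes q s0 tau0 tau1 :: real and n :: nat
  assumes q: "0 < q" "q < 1" and tau1: "tau1 \<noteq> 0"
  defines "a \<equiv> eigenpoly_coeff q s0 tau0 tau1 n"
  shows "s0 * qint q (k + 2) * qint (1/q) (k + 1) * a (k + 2) + tau0 * qint q (k + 1) * a (k + 1)
         + tau1 * qint q k * a k = tau1 * qint q n * a k"
proof (cases "n \<le> k")
  case True
  then show ?thesis by (auto simp: a_def eigenpoly_coeff.simps)
next
  case False
  then have "tau1 * (qint q k - qint q n) \<noteq> 0"
    using tau1 qint_inject[OF q] by simp
  with False show ?thesis
    by (subst (2 3) a_def, subst (1 2) eigenpoly_coeff.simps) (simp add: a_def field_simps)
qed

definition eigenpoly :: "real \<Rightarrow> real \<Rightarrow> real \<Rightarrow> real \<Rightarrow> nat \<Rightarrow> real poly" where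
  "eigenpoly q s0 tau0 tau1 n = (\<Sum>k\<le>n. monom (eigenpoly_coeff q s0 tau0 tau1 n k) k)"

lemma coeff_eigenpoly: "coeff (eigenpoly q s0 tau0 tau1 n) k = eigenpoly_coeff q s0 tau0 tau1 n k"
  by (auto simp: eigenpoly_def coeff_sum coeff_monom sum.delta eigenpoly_coeff.simps)

lemma degree_eigenpoly: "degree (eigenpoly q s0 tau0 tau1 n) = n"
proof (rule antisym)
  show "degree (eigenpoly q s0 tau0 tau1 n) \<le> n"
    by (rule degree_le) (simp add: coeff_eigenpoly eigenpoly_coeff.simps)
  show "n \<le> degree (eigenpoly q s0 tau0 tau1 n)"
    by (rule le_degree) (simp add: coeff_eigenpoly eigenpoly_coeff.simps)
qed

lemma eigenpoly_nonzero: "eigenpoly q s0 tau0 tau1 n \<noteq> 0"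
  using coeff_eigenpoly[of q s0 tau0 tau1 n n] by (auto simp: eigenpoly_coeff.simps)

lemma eigenpoly_solves_qEHT:
  fixes q :: real
  assumes "0 < q" "q < 1" "tau1 \<noteq> 0"
  shows "qEHT q (\<lambda>x. s0) (\<lambda>x. tau1 * x + tau0) (- qint q n * tau1) (poly (eigenpoly q s0 tau0 tau1 n))"
proof (subst qEHT_poly_iff)
  show "q \<noteq> 0" "q \<noteq> 1" using assms by simp_all
  show "smult s0 (poly_qderiv (1/q) (poly_qderiv q (eigenpoly q s0 tau0 tau1 n)))
      + [:tau0, tau1:] * poly_qderiv q (eigenpoly q s0 tau0 tau1 n)
      + smult (- qint q n * tau1) (eigenpoly q s0 tau0 tau1 n) = 0"
    unfolding poly_eq_iff coeff_qEHT_operator coeff_eigenpoly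
    using eigenpoly_coeff_recurrence[OF assms] by (simp add: algebra_simps)
qed

lemma summable_mult_poly:
  fixes u x :: "nat \<Rightarrow> 'a :: real_normed_field"
  assumes "\<And>d. summable (\<lambda>j. u j * x j ^ d)"
  shows "summable (\<lambda>j. u j * poly p (x j))"
proof -
  have "summable (\<lambda>j. \<Sum>i\<le>degree p. coeff p i * (u j * x j ^ i))"
    by (intro summable_sum summable_mult assms)
  then show ?thesis
    by (simp add: poly_altdef sum_distrib_left mult_ac)
qed

lemma suminf_by_parts:
  fixes a g F :: "nat \<Rightarrow> 'a :: real_normed_algebra"
  assumes "a 0 = g 0 * F 0" and "\<And>j. a (Suc j) = g (Suc j) * (F (Suc j) - F j)"
    and "summable a" and "summable (\<lambda>j. (g (Suc j) - g j) * F j)"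
    and "(\<lambda>j. g j * F j) \<longlonglongrightarrow> 0"
  shows "suminf a = - (\<Sum>j. (g (Suc j) - g j) * F j)"
proof -
  have partial: "(\<Sum>j<Suc n. a j) = g n * F n - (\<Sum>j<n. (g (Suc j) - g j) * F j)" for n
    by (induction n) (simp_all add: assms(1,2) algebra_simps)
  have "(\<lambda>n. \<Sum>j<Suc n. a j) \<longlonglongrightarrow> suminf a"
    using summable_LIMSEQ[OF assms(3)] by (rule LIMSEQ_Suc)
  moreover have "(\<lambda>n. \<Sum>j<Suc n. a j) \<longlonglongrightarrow> 0 - (\<Sum>j. (g (Suc j) - g j) * F j)"
    unfolding partial by (intro tendsto_diff assms(5) summable_LIMSEQ assms(4))
  ultimately show ?thesis
    using LIMSEQ_unique by fastforce
qed

section \<open>Orthogonality on the lattice\<close>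

locale qEHT_constant_sigma =
  fixes q s0 tau1 tau0 a2 b2 :: real
  assumes q: "0 < q" "q < 1"
    and sigma2_factor:
      "\<And>x. q * (s0 + (1 - 1/q) * x * (tau1 * x + tau0)) = (q - 1) * tau1 * (x - a2) * (x - b2)"
    and zeros: "0 < a2" "a2 \<le> b2"
    and Lambda_neg: "tau1 / s0 < 0"
begin

definition sigma2 :: "real \<Rightarrow> real" where
  "sigma2 x = (q - 1) * tau1 * (x - a2) * (x - b2)"

definition lattice :: "nat \<Rightarrow> real" where
  "lattice j = (1/q) ^ j * b2"

text \<open>As \<open>|x_j|^\<alpha> = b2^\<alpha> q_alpha^(-j)\<close>, the summand of the Jackson integral
  of \<open>\<rho>\<close> at \<open>x_j\<close> is \<open>b2^\<alpha>\<close> times \<open>weight j\<close>, where \<open>rho0\<close> is \<open>\<rho>\<close> without the factor \<open>|x|^\<alpha>\<close>.\<close>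

definition q_alpha :: real where
  "q_alpha = (1/q) * ((q - 1) * tau1) / s0"

definition rho0 :: "real \<Rightarrow> real" where
  "rho0 x = exp ((ln x / ln q - 1) * ln x) * qpoch_inf (q * a2 / x) q * qpoch_inf (q * b2 / x) q"

definition weight :: "nat \<Rightarrow> real" where
  "weight j = (1/q - 1) * b2 * (1/q) ^ j * (1/q_alpha) ^ j * rho0 (lattice j)"

definition A :: "real \<Rightarrow> real" where
  "A x = s0 * q\<^sup>2 / ((1 - q)\<^sup>2 * x\<^sup>2)"

definition B :: "real \<Rightarrow> real" where
  "B x = sigma2 x / ((1 - q)\<^sup>2 * x\<^sup>2)"

definition edge_weight :: "nat \<Rightarrow> real" where
  "edge_weight j = weight j * A (lattice j)"

definition lattice_diff :: "real poly \<Rightarrow> real poly" where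
  "lattice_diff p = p \<circ>\<^sub>p [:0, 1/q:] - p"

definition lattice_inner :: "real poly \<Rightarrow> real poly \<Rightarrow> real" where
  "lattice_inner p r = (\<Sum>j. weight j * (poly p (lattice j) * poly r (lattice j)))"

definition dirichlet_form :: "real poly \<Rightarrow> real poly \<Rightarrow> real" where
  "dirichlet_form p r =
     (\<Sum>j. edge_weight j * (poly (lattice_diff p) (lattice j) * poly (lattice_diff r) (lattice j)))"

lemma s0_nonzero: "s0 \<noteq> 0"
  using Lambda_neg by auto

lemma tau1_nonzero: "tau1 \<noteq> 0"
  using Lambda_neg by auto

lemma q_alpha_pos: "0 < q_alpha"
proof -
  have "0 < (q - 1) * (tau1 / s0)"
    using q Lambda_neg by (intro mult_neg_neg) simp_all
  moreover have "q_alpha = (q - 1) * (tau1 / s0) / q"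
    by (simp add: q_alpha_def)
  ultimately show ?thesis
    using q divide_pos_pos by metis
qed

lemma sigma2_eq: "sigma2 x = q * (s0 + (1 - 1/q) * x * (tau1 * x + tau0))"
  by (simp add: sigma2_def sigma2_factor)

lemma lattice_Suc: "lattice (Suc j) = lattice j / q"
  by (simp add: lattice_def)

lemma lattice_ge: "b2 \<le> lattice j"
  using q zeros by (simp add: lattice_def one_le_power)

lemma lattice_pos: "0 < lattice j"
  using lattice_ge[of j] zeros by linarith

lemma inj_lattice: "inj lattice"
proof (rule injI)
  fix m n assume "lattice m = lattice n"
  moreover have "1 < 1/q" "b2 \<noteq> 0" using q zeros by simp_all
  ultimately show "m = n" by (simp add: lattice_def)
qed

lemma poly_lattice_diff:
  "poly (lattice_diff p) (lattice j) = poly p (lattice (Suc j)) - poly p (lattice j)"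
  by (simp add: lattice_diff_def poly_pcompose lattice_Suc)

lemma qEHT_difference_form:
  assumes x: "x \<noteq> 0"
  shows "s0 * qD (1/q) (qD q f) x + (tau1 * x + tau0) * qD q f x
       = A x * (f (x / q) - f x) + B x * (f (q * x) - f x)"
proof -
  define D where "D = (1 - q) * x"
  have nz: "q \<noteq> 0" "D \<noteq> 0" "x / q \<noteq> 0"
    using q x by (simp_all add: D_def)
  have D: "(1 - q) * x = D" "(1 - q) * (x / q) = D / q" "(1 - 1/q) * x = - D / q"
    "(1 - q)\<^sup>2 * x\<^sup>2 = D * D"
    using nz by (simp_all add: D_def field_simps power2_eq_square)
  have "s0 * qD (1/q) (qD q f) x + (tau1 * x + tau0) * qD q f x
      = s0 * (((f x - f (q * x)) / ((1 - q) * x) - (f (x / q) - f x) / ((1 - q) * (x / q)))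
               / ((1 - 1/q) * x))
        + (tau1 * x + tau0) * ((f x - f (q * x)) / ((1 - q) * x))"
    using nz x by (simp add: qD_def)
  also have "\<dots> = A x * (f (x / q) - f x) + B x * (f (q * x) - f x)"
    unfolding A_def B_def sigma2_eq D using nz
    by (simp add: field_simps power2_eq_square)
  finally show ?thesis .
qed

lemma qEHT_lattice_equation:
  assumes "qEHT q (\<lambda>x. s0) (\<lambda>x. tau1 * x + tau0) lam f"
  shows "A (lattice j) * (f (lattice (Suc j)) - f (lattice j))
       + B (lattice j) * (f (q * lattice j) - f (lattice j)) = - lam * f (lattice j)"
  using assms qEHT_difference_form[of "lattice j" f] lattice_pos[of j]
  unfolding qEHT_def lattice_Suc by (metis add_eq_0_iff2 less_irrefl mult_minus_left)

lemma rho0_pos: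
  assumes "b2 \<le> y"
  shows "0 < rho0 y"
proof -
  have y: "0 < y" using assms zeros by linarith
  have "q * a2 < a2" "q * b2 < b2"
    using q zeros by simp_all
  then have "q * a2 < y" "q * b2 < y"
    using assms zeros by linarith+
  with y q zeros show ?thesis
    unfolding rho0_def by (simp add: qpoch_inf_pos)
qed

lemma rho0_recurrence:
  assumes y: "0 < y"
  shows "rho0 y * ((y - a2) * (y - b2)) = rho0 (q * y)"
proof -
  have ln_qy: "ln (q * y) = ln q + ln y"
    using q y by (simp add: ln_mult)
  have exponent: "(ln y / ln q - 1) * ln y + 2 * ln y = (ln (q * y) / ln q - 1) * ln (q * y)"
  proof -
    define L where "L = ln q"
    have "L \<noteq> 0"
      using q by (simp add: L_def)
    then have "(ln y / L - 1) * ln y + 2 * ln y = ((L + ln y) / L - 1) * (L + ln y)"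
      by (simp add: field_simps power2_eq_square)
    then show ?thesis
      unfolding ln_qy L_def .
  qed
  have "2 * ln y = ln (y\<^sup>2)"
    using y by (simp add: ln_realpow)
  then have "exp (2 * ln y) = y\<^sup>2"
    using y by simp
  then have log_power_shift: "exp ((ln y / ln q - 1) * ln y) * y\<^sup>2 = exp ((ln (q * y) / ln q - 1) * ln (q * y))"
    by (simp add: exp_add flip: exponent)
  have shift: "(1 - c / y) * qpoch_inf (q * c / y) q = qpoch_inf (c / y) q" for c
    using qpoch_inf_shift[OF q, of "c / y"] by (simp add: ac_simps)
  have "rho0 y * ((y - a2) * (y - b2))
      = (exp ((ln y / ln q - 1) * ln y) * y\<^sup>2)
        * ((1 - a2 / y) * qpoch_inf (q * a2 / y) q) * ((1 - b2 / y) * qpoch_inf (q * b2 / y) q)"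
  proof -
    have "(y - a2) * (y - b2) = y\<^sup>2 * (1 - a2 / y) * (1 - b2 / y)"
      using y by (simp add: field_simps power2_eq_square)
    then show ?thesis
      unfolding rho0_def by (simp only: ac_simps)
  qed
  also have "\<dots> = rho0 (q * y)"
    unfolding log_power_shift shift rho0_def using q by simp
  finally show ?thesis .
qed

lemma weight_pos: "0 < weight j"
  using q zeros q_alpha_pos rho0_pos[OF lattice_ge] by (simp add: weight_def)

lemma weight_pearson: "weight (Suc j) * sigma2 (lattice (Suc j)) = weight j * s0"
proof -
  have "weight (Suc j) * sigma2 (lattice (Suc j))
      = ((1/q - 1) * b2 * (1/q) ^ j * (1/q_alpha) ^ j) * ((1/q) * (1/q_alpha) * ((q - 1) * tau1))
        * (rho0 (lattice (Suc j)) * ((lattice (Suc j) - a2) * (lattice (Suc j) - b2)))"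
    unfolding weight_def sigma2_def by (simp only: power_Suc mult_ac)
  also have "(1/q) * (1/q_alpha) * ((q - 1) * tau1) = s0"
  proof -
    have "q \<noteq> 0" "(q - 1) * tau1 \<noteq> 0"
      using q tau1_nonzero by simp_all
    then show ?thesis
      using s0_nonzero by (simp add: q_alpha_def)
  qed
  also have "rho0 (lattice (Suc j)) * ((lattice (Suc j) - a2) * (lattice (Suc j) - b2)) = rho0 (lattice j)"
    using rho0_recurrence[OF lattice_pos, of "Suc j"] q by (simp add: lattice_Suc)
  finally show ?thesis
    by (simp add: weight_def mult_ac)
qed

lemma B_lattice_0: "B (lattice 0) = 0"
  by (simp add: B_def sigma2_def lattice_def)

lemma edge_weight_eq: "edge_weight j = weight (Suc j) * B (lattice (Suc j))"
proof -
  have "weight (Suc j) * B (lattice (Suc j)) = weight j * s0 / ((1 - q)\<^sup>2 * (lattice j / q)\<^sup>2)"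
    unfolding B_def using weight_pearson[of j] by (simp add: lattice_Suc)
  also have "\<dots> = edge_weight j"
    using q lattice_pos[of j] by (simp add: edge_weight_def A_def field_simps)
  finally show ?thesis by simp
qed

lemma sigma2_lattice_unbounded: "\<exists>N. \<forall>j\<ge>N. K \<le> \<bar>sigma2 (lattice (Suc j))\<bar>"
proof -
  define \<delta> where "\<delta> = b2 * (1/q - 1)"
  define \<epsilon> where "\<epsilon> = (1 - q) * \<bar>tau1\<bar> * \<delta>\<^sup>2"
  have \<delta>: "0 < \<delta>" using q zeros by (simp add: \<delta>_def)
  have \<epsilon>: "0 < \<epsilon>" using q tau1_nonzero \<delta> by (simp add: \<epsilon>_def)
  obtain N :: nat where N: "K / \<epsilon> < N" using reals_Archimedean2 by blast
  have "K \<le> \<bar>sigma2 (lattice (Suc j))\<bar>" if "N \<le> j" for j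
  proof -
    define y where "y = lattice (Suc j)"
    have "1 + real (Suc j) * (1/q - 1) \<le> (1/q) ^ Suc j"
      using Bernoulli_inequality[of "1/q - 1" "Suc j"] q by simp
    then have "b2 * (1 + real (Suc j) * (1/q - 1)) \<le> b2 * (1/q) ^ Suc j"
      using zeros by (intro mult_left_mono) simp_all
    then have far: "\<delta> * Suc j \<le> y - b2"
      by (simp add: y_def lattice_def \<delta>_def algebra_simps)
    have "\<delta> * 1 \<le> \<delta> * Suc j"
      using \<delta> by (intro mult_left_mono) simp_all
    moreover have "0 \<le> \<delta> * Suc j"
      using \<delta> by simp
    ultimately have y: "\<delta> \<le> y - a2" "0 \<le> y - a2" "0 \<le> y - b2"
      using far zeros by linarith+
    then have "\<delta> * (\<delta> * Suc j) \<le> (y - a2) * (y - b2)"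
      using far \<delta> by (intro mult_mono) simp_all
    then have "(1 - q) * \<bar>tau1\<bar> * (\<delta> * (\<delta> * Suc j)) \<le> (1 - q) * \<bar>tau1\<bar> * ((y - a2) * (y - b2))"
      using q by (intro mult_left_mono) simp_all
    also have "\<dots> = \<bar>sigma2 y\<bar>"
      using q y by (simp add: sigma2_def abs_mult)
    finally have "\<epsilon> * Suc j \<le> \<bar>sigma2 y\<bar>"
      by (simp add: \<epsilon>_def power2_eq_square mult_ac)
    moreover have "K < \<epsilon> * Suc j"
      using N \<epsilon> that by (simp add: divide_less_eq mult.commute less_le_trans)
    ultimately show ?thesis by (simp add: y_def)
  qed
  then show ?thesis by blast
qed

lemma summable_weight_power: "summable (\<lambda>j. weight j * lattice j ^ d)"
proof -
  define K where "K = (1/q) ^ d * \<bar>s0\<bar>"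
  have K: "0 < K"
    using q s0_nonzero by (simp add: K_def)
  obtain N where N: "\<And>j. N \<le> j \<Longrightarrow> 2 * K \<le> \<bar>sigma2 (lattice (Suc j))\<bar>"
    using sigma2_lattice_unbounded[of "2 * K"] by auto
  show ?thesis
  proof (rule summable_ratio_test[of "1/2" N])
    fix j assume "N \<le> j"
    define y where "y = sigma2 (lattice (Suc j))"
    have y: "2 * K \<le> \<bar>y\<bar>"
      using N[OF \<open>N \<le> j\<close>] by (simp add: y_def)
    with K have "y \<noteq> 0"
      by auto
    define r where "r = (1/q) ^ d * s0 / y"
    have "weight (Suc j) = weight j * s0 / y"
      using weight_pearson[of j] \<open>y \<noteq> 0\<close> by (simp add: y_def field_simps)
    then have "norm (weight (Suc j) * lattice (Suc j) ^ d) = \<bar>r\<bar> * norm (weight j * lattice j ^ d)"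
      by (simp add: r_def lattice_Suc power_divide abs_mult mult_ac)
    also have "\<dots> \<le> 1/2 * norm (weight j * lattice j ^ d)"
    proof (rule mult_right_mono)
      have "\<bar>r\<bar> = K / \<bar>y\<bar>"
        using q by (simp add: r_def K_def abs_mult)
      also have "\<dots> \<le> K / (2 * K)"
        using K y by (intro divide_left_mono) simp_all
      also have "\<dots> = 1/2"
        using K by simp
      finally show "\<bar>r\<bar> \<le> 1/2" .
    qed simp
    finally show "norm (weight (Suc j) * lattice (Suc j) ^ d) \<le> 1/2 * norm (weight j * lattice j ^ d)" .
  qed simp
qed

lemma summable_edge_weight_power: "summable (\<lambda>j. edge_weight j * lattice j ^ d)"
proof -
  define K where "K = \<bar>s0\<bar> * q\<^sup>2 / ((1 - q)\<^sup>2 * b2\<^sup>2)"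
  show ?thesis
  proof (rule summable_comparison_test'[OF summable_mult[OF summable_weight_power, of K d]])
    fix j
    have "(1 - q)\<^sup>2 * b2\<^sup>2 \<le> (1 - q)\<^sup>2 * (lattice j)\<^sup>2"
      using lattice_ge[of j] zeros by (intro mult_left_mono power_mono) simp_all
    moreover have "0 < (1 - q)\<^sup>2 * (lattice j)\<^sup>2 * ((1 - q)\<^sup>2 * b2\<^sup>2)"
      using q zeros lattice_pos[of j] by simp
    ultimately have "\<bar>s0\<bar> * q\<^sup>2 / ((1 - q)\<^sup>2 * (lattice j)\<^sup>2) \<le> K"
      unfolding K_def by (intro divide_left_mono) simp_all
    then have "\<bar>A (lattice j)\<bar> \<le> K"
      by (simp add: A_def abs_mult)
    then have "\<bar>A (lattice j)\<bar> * (weight j * lattice j ^ d) \<le> K * (weight j * lattice j ^ d)"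
      using weight_pos[of j] lattice_pos[of j] by (intro mult_right_mono) simp_all
    then show "norm (edge_weight j * lattice j ^ d) \<le> K * (weight j * lattice j ^ d)"
      using weight_pos[of j] lattice_pos[of j] by (simp add: edge_weight_def abs_mult mult_ac)
  qed
qed

lemma summable_weight_poly: "summable (\<lambda>j. weight j * poly p (lattice j))"
  by (rule summable_mult_poly[OF summable_weight_power])

lemma summable_edge_weight_poly: "summable (\<lambda>j. edge_weight j * poly p (lattice j))"
  by (rule summable_mult_poly[OF summable_edge_weight_power])

lemma lattice_inner_commute: "lattice_inner p r = lattice_inner r p"
  by (simp add: lattice_inner_def mult_ac)

lemma dirichlet_form_commute: "dirichlet_form p r = dirichlet_form r p"
  by (simp add: dirichlet_form_def mult_ac)

lemma lattice_inner_pos: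
  assumes "p \<noteq> 0"
  shows "0 < lattice_inner p p"
proof -
  have "finite (lattice -` {x. poly p x = 0})"
    using poly_roots_finite[OF assms] inj_lattice by (rule finite_vimageI)
  then obtain j where j: "poly p (lattice j) \<noteq> 0"
    using ex_new_if_finite[OF infinite_UNIV_nat] by auto
  show ?thesis
    unfolding lattice_inner_def
  proof (rule suminf_pos2)
    show "summable (\<lambda>j. weight j * (poly p (lattice j) * poly p (lattice j)))"
      using summable_weight_poly[of "p * p"] by simp
    show "0 \<le> weight k * (poly p (lattice k) * poly p (lattice k))" for k
      using weight_pos[of k] by simp
    show "0 < weight j * (poly p (lattice j) * poly p (lattice j))"
    proof -
      have "0 < (poly p (lattice j))\<^sup>2"
        using j by simp
      with weight_pos[of j] show ?thesis
        by (simp add: power2_eq_square)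
    qed
  qed
qed

lemma lattice_inner_eigen:
  assumes eq: "qEHT q (\<lambda>x. s0) (\<lambda>x. tau1 * x + tau0) lam (poly p)"
  shows "lam * lattice_inner p r = dirichlet_form p r"
proof -
  define g where "g j = poly r (lattice j)" for j
  define F where "F j = edge_weight j * poly (lattice_diff p) (lattice j)" for j
  define a where "a j = weight j * g j * (A (lattice j) * poly (lattice_diff p) (lattice j)
                   + B (lattice j) * (poly p (q * lattice j) - poly p (lattice j)))" for j
  have a_eq: "a j = - lam * (weight j * poly (p * r) (lattice j))" for j
    using qEHT_lattice_equation[OF eq, of j] by (simp add: a_def g_def poly_lattice_diff)
  have "suminf a = - (\<Sum>j. (g (Suc j) - g j) * F j)"
  proof (rule suminf_by_parts)
    show "a 0 = g 0 * F 0"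
      using B_lattice_0 by (simp add: a_def F_def edge_weight_def)
    show "a (Suc j) = g (Suc j) * (F (Suc j) - F j)" for j
    proof -
      have "q * lattice (Suc j) = lattice j"
        using q by (simp add: lattice_Suc)
      then show ?thesis
        by (simp add: a_def F_def edge_weight_eq[of j] edge_weight_def[of "Suc j"]
            poly_lattice_diff algebra_simps)
    qed
    show "summable a"
      unfolding a_eq by (intro summable_mult summable_weight_poly)
    show "summable (\<lambda>j. (g (Suc j) - g j) * F j)"
      using summable_edge_weight_poly[of "lattice_diff r * lattice_diff p"]
      by (simp add: g_def F_def poly_lattice_diff mult_ac)
    show "(\<lambda>j. g j * F j) \<longlonglongrightarrow> 0"
      using summable_LIMSEQ_zero[OF summable_edge_weight_poly[of "r * lattice_diff p"]]
      by (simp add: g_def F_def mult_ac)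
  qed
  moreover have "suminf a = - lam * lattice_inner p r"
    unfolding a_eq lattice_inner_def
    using summable_weight_poly[of "p * r"] by (subst suminf_mult) simp_all
  ultimately show ?thesis
    by (simp add: dirichlet_form_def g_def F_def poly_lattice_diff mult_ac)
qed

lemma lattice_inner_orthogonal:
  assumes "qEHT q (\<lambda>x. s0) (\<lambda>x. tau1 * x + tau0) lam1 (poly p)"
    and "qEHT q (\<lambda>x. s0) (\<lambda>x. tau1 * x + tau0) lam2 (poly r)"
    and "lam1 \<noteq> lam2"
  shows "lattice_inner p r = 0"
proof -
  have "lam1 * lattice_inner p r = lam2 * lattice_inner p r"
    using lattice_inner_eigen[OF assms(1), of r] lattice_inner_eigen[OF assms(2), of p]
    by (simp add: lattice_inner_commute dirichlet_form_commute)
  with assms(3) show ?thesis by simp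
qed

lemma jackson_inf_has_rho:
  fixes \<alpha> :: complex
  assumes alpha: "exp (\<alpha> * of_real (ln q)) = of_real q_alpha"
    and summable: "summable (\<lambda>j. weight j * f (lattice j))"
  shows "jackson_inf_has q (\<lambda>x. of_real (f x) * (exp (\<alpha> * of_real (ln \<bar>x\<bar>)) * of_real (rho0 x))) b2
           (exp (\<alpha> * of_real (ln b2)) * of_real (\<Sum>j. weight j * f (lattice j)))"
proof -
  define E where "E = exp (\<alpha> * of_real (ln b2))"
  have "exp (\<alpha> * of_real (ln \<bar>lattice j\<bar>)) = E * of_real ((1/q_alpha) ^ j)" for j
  proof -
    have "ln \<bar>lattice j\<bar> = ln b2 - real j * ln q"
      using q zeros lattice_pos[of j] by (simp add: lattice_def ln_mult ln_realpow ln_div)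
    then have "\<alpha> * of_real (ln \<bar>lattice j\<bar>) = \<alpha> * of_real (ln b2) - of_nat j * (\<alpha> * of_real (ln q))"
      by (subst (asm) eq_commute) (simp add: algebra_simps)
    then have "exp (\<alpha> * of_real (ln \<bar>lattice j\<bar>)) = E / exp (\<alpha> * of_real (ln q)) ^ j"
      by (simp add: E_def exp_diff exp_of_nat_mult)
    then show ?thesis
      by (simp add: alpha power_divide divide_inverse power_inverse)
  qed
  then have terms: "(\<lambda>j. of_real ((1/q - 1) * b2 * (1/q) ^ j)
        * (of_real (f (lattice j)) * (exp (\<alpha> * of_real (ln \<bar>lattice j\<bar>)) * of_real (rho0 (lattice j)))))
      = (\<lambda>j. E * of_real (weight j * f (lattice j)))"
    by (simp add: weight_def mult_ac)
  show ?thesis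
    unfolding jackson_inf_has_def lattice_def[symmetric] E_def[symmetric] terms
    by (intro sums_mult sums_of_real summable_sums summable)
qed

lemma jackson_inf_has_lattice_inner:
  fixes \<alpha> :: complex
  assumes "exp (\<alpha> * of_real (ln q)) = of_real q_alpha"
  shows "jackson_inf_has q
           (\<lambda>x. of_real (poly p x * poly r x) * (exp (\<alpha> * of_real (ln \<bar>x\<bar>)) * of_real (rho0 x))) b2
           (exp (\<alpha> * of_real (ln b2)) * of_real (lattice_inner p r))"
proof -
  have "summable (\<lambda>j. weight j * (poly p (lattice j) * poly r (lattice j)))"
    using summable_weight_poly[of "p * r"] by simp
  from jackson_inf_has_rho[where f = "\<lambda>x. poly p x * poly r x", OF assms this]
  show ?thesis
    unfolding lattice_inner_def by simp
qed

end

theorem theorem5p8: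
  fixes q s0 tau1 tau0 a2 b2 :: real and \<alpha> :: complex
  assumes q: "0 < q" "q < 1"
    and s0: "s0 \<noteq> 0"
    and tau1: "tau1 \<noteq> 0"
    and fact: "\<forall>x. q * (s0 + (1 - 1/q) * x * (tau1 * x + tau0))
                    = (q - 1) * tau1 * (x - a2) * (x - b2)"
    and zeros: "0 < a2" "a2 \<le> b2"
    and Lam: "tau1 / s0 < 0"
    and alpha: "exp (\<alpha> * of_real (ln q)) = of_real ((1/q) * ((q - 1) * tau1) / s0)"
  shows "\<exists>(P :: nat \<Rightarrow> real poly) (d :: nat \<Rightarrow> complex).
     (\<forall>n. degree (P n) = n \<and>
          qEHT q (\<lambda>x. s0) (\<lambda>x. tau1 * x + tau0)
               (qlambda q n tau1 (deriv (deriv (\<lambda>x. s0)) 0)) (poly (P n)) \<and>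
          d n \<noteq> 0) \<and>
     (\<forall>m n. jackson_inf_has q
        (\<lambda>x. of_real (poly (P n) x * poly (P m) x)
             * (exp (\<alpha> * of_real (ln \<bar>x\<bar>))
                * of_real (exp ((ln x / ln q - 1) * ln x)
                           * qpoch_inf (q * a2 / x) q * qpoch_inf (q * b2 / x) q)))
        b2 (if m = n then d n else 0))"
proof -
  interpret qEHT_constant_sigma q s0 tau1 tau0 a2 b2
    using q fact zeros Lam by unfold_locales auto
  define P where "P n = eigenpoly q s0 tau0 tau1 n" for n
  define d where "d n = exp (\<alpha> * of_real (ln b2)) * of_real (lattice_inner (P n) (P n))" for n
  have solves: "qEHT q (\<lambda>x. s0) (\<lambda>x. tau1 * x + tau0)
      (qlambda q n tau1 (deriv (deriv (\<lambda>x. s0)) 0)) (poly (P n))" for n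
    unfolding P_def qlambda_constant_sigma[OF q(1)] using q tau1 by (rule eigenpoly_solves_qEHT)
  have orthogonal: "lattice_inner (P n) (P m) = 0" if "m \<noteq> n" for m n
    unfolding P_def
    by (rule lattice_inner_orthogonal[OF eigenpoly_solves_qEHT[OF q tau1] eigenpoly_solves_qEHT[OF q tau1]])
       (use tau1 that in \<open>simp add: qint_inject[OF q]\<close>)
  have nonzero: "d n \<noteq> 0" for n
  proof -
    have "0 < lattice_inner (P n) (P n)"
      unfolding P_def by (rule lattice_inner_pos[OF eigenpoly_nonzero])
    then show ?thesis
      by (auto simp: d_def)
  qed
  have jackson: "jackson_inf_has q
      (\<lambda>x. of_real (poly (P n) x * poly (P m) x) * (exp (\<alpha> * of_real (ln \<bar>x\<bar>)) * of_real (rho0 x)))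
      b2 (if m = n then d n else 0)" for m n
    using jackson_inf_has_lattice_inner[OF alpha[folded q_alpha_def], of "P n" "P m"] orthogonal[of m n]
    by (cases "m = n") (simp_all add: d_def)
  show ?thesis
    using solves nonzero jackson unfolding rho0_def
    by (intro exI[of _ P] exI[of _ d]) (simp add: P_def degree_eigenpoly)
qed

end
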